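(* Let $(t,x,m)\in\mathbf D$. For each $\delta>0$ there exists $\nu^\delta\in\mathcal U(t,x,m+\delta)$ such that $F(t,x;\nu^\delta)\ge\delta^{-1}\wedge V(t,x,m+\delta)-\delta$. Let such $\nu^\delta$ be fixed, let $\delta_0>0$, and assume that for all $0<\delta\le\delta_0$ there exists $\tilde\nu^\delta\in\mathcal U(t,x,m)$ such that $\lim_{\delta\downarrow0}P\{X^{\nu^\delta}_{t,x}(T)\ne X^{\tilde\nu^\delta}_{t,x}(T)\}=0$ and the family $\{[f(X^{\nu^\delta}_{t,x}(T))-f(X^{\tilde\nu^\delta}_{t,x}(T))]^+:\ 0<\delta\le\delta_0\}\subseteq L^1(P)$ is uniformly integrable. Then $m'\mapsto V(t,x,m')$ is right continuous at $m$.
   Context: Fix $T\in(0,\infty)$, a probability space $(\Omega,\mathcal F,P)$ with a filtration, and a separable metric space $S$. For each $t\in[0,T]$ a set $\mathcal U_t$ of controls; for $(t,x)\in[0,T]\times S$ and $\nu\in\mathcal U_t$ a càdlàg adapted $S$-valued process $X^\nu_{t,x}$ on $[t,T]$. Measurable $f,g:S\to\mathbb R$ with $E|f(X^\nu_{t,x}(T))|<\infty$, $E|g(X^\nu_{t,x}(T))|<\infty$ for all $\nu\in\mathcal U_t$. $F(t,x;\nu):=E[f(X^\nu_{t,x}(T))]$, $G(t,x;\nu):=E[g(X^\nu_{t,x}(T))]$, $\mathcal U(t,x,m):=\{\nu\in\mathcal U_t:G(t,x;\nu)\le m\}$, $V(t,x,m):=\sup_{\nu\in\mathcal U(t,x,m)}F(t,x;\nu)$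 ($\sup\emptyset=-\infty$), and $\mathbf D:=\{(t,x,m)\in[0,T]\times S\times\mathbb R:\ \mathcal U(t,x,m)\ne\emptyset\}$. *)

theory Defs
  imports "HOL-Probability.Probability"
begin

text \<open>Setting.  \<open>M\<close>: probability space; \<open>Fil\<close>: filtration; \<open>U t\<close>: the set of controls
  admissible at time \<open>t\<close>; \<open>X t x \<nu> s \<omega>\<close>: the controlled state process \<open>X^\<nu>_{t,x}(s)\<close> at time
  \<open>s \<in> [t,T]\<close> and sample point \<open>\<omega>\<close>.\<close>

definition cadlag_on :: "real set \<Rightarrow> (real \<Rightarrow> 's::topological_space) \<Rightarrow> bool" where
  "cadlag_on I p \<longleftrightarrow>
     (\<forall>s\<in>I. (p \<longlongrightarrow> p s) (at s within (I \<inter> {s<..}))) \<and>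
     (\<forall>s\<in>I. \<exists>l. (p \<longlongrightarrow> l) (at s within (I \<inter> {..<s})))"

definition Fun :: "'w measure \<Rightarrow> real \<Rightarrow> (real \<Rightarrow> 's \<Rightarrow> 'c \<Rightarrow> real \<Rightarrow> 'w \<Rightarrow> 's)
    \<Rightarrow> ('s \<Rightarrow> real) \<Rightarrow> real \<Rightarrow> 's \<Rightarrow> 'c \<Rightarrow> real" where
  "Fun M T X f t x \<nu> = integral\<^sup>L M (\<lambda>\<omega>. f (X t x \<nu> T \<omega>))"

definition Uc :: "'w measure \<Rightarrow> real \<Rightarrow> (real \<Rightarrow> 'c set) \<Rightarrow> (real \<Rightarrow> 's \<Rightarrow> 'c \<Rightarrow> real \<Rightarrow> 'w \<Rightarrow> 's)
    \<Rightarrow> ('s \<Rightarrow> real) \<Rightarrow> real \<Rightarrow> 's \<Rightarrow> real \<Rightarrow> 'c set" where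
  "Uc M T U X g t x m = {\<nu> \<in> U t. Fun M T X g t x \<nu> \<le> m}"

text \<open>Value function, extended-real valued; \<open>Sup {} = -\<infinity>\<close>.\<close>
definition Val :: "'w measure \<Rightarrow> real \<Rightarrow> (real \<Rightarrow> 'c set) \<Rightarrow> (real \<Rightarrow> 's \<Rightarrow> 'c \<Rightarrow> real \<Rightarrow> 'w \<Rightarrow> 's)
    \<Rightarrow> ('s \<Rightarrow> real) \<Rightarrow> ('s \<Rightarrow> real) \<Rightarrow> real \<Rightarrow> 's \<Rightarrow> real \<Rightarrow> ereal" where
  "Val M T U X f g t x m = (SUP \<nu>\<in>Uc M T U X g t x m. ereal (Fun M T X f t x \<nu>))"

definition Dom :: "'w measure \<Rightarrow> real \<Rightarrow> (real \<Rightarrow> 'c set) \<Rightarrow> (real \<Rightarrow> 's \<Rightarrow> 'c \<Rightarrow> real \<Rightarrow> 'w \<Rightarrow> 's)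
    \<Rightarrow> ('s \<Rightarrow> real) \<Rightarrow> (real \<times> 's \<times> real) set" where
  "Dom M T U X g = {(t, x, m). t \<in> {0..T} \<and> Uc M T U X g t x m \<noteq> {}}"

definition unif_integrable :: "'w measure \<Rightarrow> 'i set \<Rightarrow> ('i \<Rightarrow> 'w \<Rightarrow> real) \<Rightarrow> bool" where
  "unif_integrable M I h \<longleftrightarrow>
     (\<forall>i\<in>I. integrable M (h i)) \<and>
     (\<forall>\<epsilon>>0. \<exists>K. \<forall>i\<in>I.
        (\<integral>\<omega>. \<bar>h i \<omega>\<bar> * indicator {\<omega>. K < \<bar>h i \<omega>\<bar>} \<omega> \<partial>M) \<le> \<epsilon>)"

end

theory Submission
  imports Defs
begin

(* Monotonicity of m' |-> V(t,x,m') gives the lower half of right continuity for free, so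
   only  limsup_{d -> 0+} V(t,x,m+d) <= V(t,x,m)  has to be shown.  The delta-optimal controls
   nu^d in U(t,x,m+d) satisfy  min(1/d, V(t,x,m+d)) - d <= F(nu^d);  comparing them with the
   feasible controls ~nu^d in U(t,x,m),
     F(nu^d) <= F(~nu^d) + E[(f(X^{nu^d}) - f(X^{~nu^d}))^+] <= V(t,x,m) + o(1),
   because the excess vanishes on the disagreement set {X^{nu^d}(T) <> X^{~nu^d}(T)}, whose
   probability tends to 0, and the excesses are uniformly integrable.  Since 1/d -> infinity,
   the truncation by 1/d is eventually inactive and V(t,x,m+d) <= V(t,x,m) + o(1). *)

(* Splitting an integral at level K: on {h > K} use the tail integral, elsewhere h <= K,
   and h lives on A. *)
lemma integral_le_tail_plus_level:
  fixes h :: "'w \<Rightarrow> real"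
  assumes M: "finite_measure M" and h_int: "integrable M h" and h_nonneg: "\<And>\<omega>. 0 \<le> h \<omega>"
    and A: "A \<in> sets M" and h_zero: "\<And>\<omega>. \<omega> \<in> space M \<Longrightarrow> \<omega> \<notin> A \<Longrightarrow> h \<omega> = 0"
  shows "integral\<^sup>L M h \<le> (\<integral>\<omega>. \<bar>h \<omega>\<bar> * indicator {\<omega>. K < \<bar>h \<omega>\<bar>} \<omega> \<partial>M) + max K 0 * measure M A"
proof -
  interpret finite_measure M by (rule M)
  have tail_int: "integrable M (\<lambda>\<omega>. \<bar>h \<omega>\<bar> * indicator {\<omega>. K < \<bar>h \<omega>\<bar>} \<omega>)"
    using h_int by (intro Bochner_Integration.integrable_bound[OF integrable_abs[OF h_int]])
      (auto simp: indicator_def)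
  have level_int: "integrable M (\<lambda>\<omega>. max K 0 * indicator A \<omega>)"
    using A by (intro integrable_mult_right integrable_real_indicator) (auto simp: emeasure_eq_measure)
  have "integral\<^sup>L M h \<le> (\<integral>\<omega>. \<bar>h \<omega>\<bar> * indicator {\<omega>. K < \<bar>h \<omega>\<bar>} \<omega> + max K 0 * indicator A \<omega> \<partial>M)"
  proof (rule integral_mono[OF h_int Bochner_Integration.integrable_add[OF tail_int level_int]])
    fix \<omega> assume "\<omega> \<in> space M"
    then show "h \<omega> \<le> \<bar>h \<omega>\<bar> * indicator {\<omega>. K < \<bar>h \<omega>\<bar>} \<omega> + max K 0 * indicator A \<omega>"
      using h_zero[of \<omega>] h_nonneg[of \<omega>] by (auto simp: indicator_def)
  qed
  also have "\<dots> = (\<integral>\<omega>. \<bar>h \<omega>\<bar> * indicator {\<omega>. K < \<bar>h \<omega>\<bar>} \<omega> \<partial>M) + max K 0 * measure M A"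
    using tail_int level_int A by (simp add: Int_absorb2 sets.sets_into_space)
  finally show ?thesis .
qed

lemma unif_integrable_vanishing_support:
  fixes h :: "'i \<Rightarrow> 'w \<Rightarrow> real"
  assumes M: "finite_measure M" and ui: "unif_integrable M I h"
    and h_nonneg: "\<And>i \<omega>. 0 \<le> h i \<omega>"
    and A: "\<And>i. i \<in> I \<Longrightarrow> A i \<in> sets M"
    and h_zero: "\<And>i \<omega>. i \<in> I \<Longrightarrow> \<omega> \<in> space M \<Longrightarrow> \<omega> \<notin> A i \<Longrightarrow> h i \<omega> = 0"
    and A_small: "((\<lambda>i. measure M (A i)) \<longlongrightarrow> 0) F"
    and in_I: "eventually (\<lambda>i. i \<in> I) F"
  shows "((\<lambda>i. integral\<^sup>L M (h i)) \<longlongrightarrow> 0) F"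
proof (rule order_tendstoI)
  fix e :: real assume "e < 0"
  have "0 \<le> integral\<^sup>L M (h i)" for i
    using h_nonneg by (simp add: integral_nonneg)
  then have "e < integral\<^sup>L M (h i)" for i
    using \<open>e < 0\<close> by (meson less_le_trans)
  then show "eventually (\<lambda>i. e < integral\<^sup>L M (h i)) F" by simp
next
  fix e :: real assume e: "0 < e"
  obtain K where K: "\<And>i. i \<in> I \<Longrightarrow> (\<integral>\<omega>. \<bar>h i \<omega>\<bar> * indicator {\<omega>. K < \<bar>h i \<omega>\<bar>} \<omega> \<partial>M) \<le> e / 3"
    using ui e unfolding unif_integrable_def by (meson divide_pos_pos zero_less_numeral)
  define c where "c = max K 0 + 1"
  have c: "0 < c" "max K 0 \<le> c" unfolding c_def by auto
  have "eventually (\<lambda>i. measure M (A i) < e / (3 * c)) F"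
    using order_tendstoD(2)[OF A_small] e c by simp
  with in_I show "eventually (\<lambda>i. integral\<^sup>L M (h i) < e) F"
  proof eventually_elim
    case (elim i)
    have "max K 0 * measure M (A i) \<le> c * (e / (3 * c))"
      using elim c by (intro mult_mono) auto
    also have "\<dots> = e / 3" using c by simp
    finally have level: "max K 0 * measure M (A i) \<le> e / 3" .
    have "integrable M (h i)" using ui elim unfolding unif_integrable_def by blast
    then have "integral\<^sup>L M (h i)
        \<le> (\<integral>\<omega>. \<bar>h i \<omega>\<bar> * indicator {\<omega>. K < \<bar>h i \<omega>\<bar>} \<omega> \<partial>M) + max K 0 * measure M (A i)"
      using elim by (intro integral_le_tail_plus_level[OF M _ h_nonneg A h_zero])
    then have "integral\<^sup>L M (h i) \<le> e / 3 + e / 3"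
      using K[of i] level elim by linarith
    then show ?case using e by linarith
  qed
qed

lemma integral_diff_le_positive_part:
  fixes u v :: "'w \<Rightarrow> real"
  assumes "integrable M u" "integrable M v"
  shows "integral\<^sup>L M u - integral\<^sup>L M v \<le> (\<integral>\<omega>. max 0 (u \<omega> - v \<omega>) \<partial>M)"
proof -
  have "integral\<^sup>L M u - integral\<^sup>L M v = (\<integral>\<omega>. u \<omega> - v \<omega> \<partial>M)"
    using assms by simp
  also have "\<dots> \<le> (\<integral>\<omega>. max 0 (u \<omega> - v \<omega>) \<partial>M)"
    using assms by (intro integral_mono) auto
  finally show ?thesis .
qed

(* Every nonempty family has an element within delta of the supremum truncated at 1/delta;
   the truncation makes this meaningful also when the supremum is infinite. *)
lemma near_optimal_exists:
  fixes \<phi> :: "'c \<Rightarrow> real"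
  assumes "S \<noteq> {}" and "0 < \<delta>"
  shows "\<exists>\<nu>\<in>S. min (ereal (1 / \<delta>)) (SUP \<nu>\<in>S. ereal (\<phi> \<nu>)) - ereal \<delta> \<le> ereal (\<phi> \<nu>)"
proof -
  let ?s = "SUP \<nu>\<in>S. ereal (\<phi> \<nu>)"
  obtain \<nu>0 where "\<nu>0 \<in> S" using assms(1) by blast
  then have "ereal (\<phi> \<nu>0) \<le> ?s" by (rule SUP_upper)
  then have "min (ereal (1 / \<delta>)) ?s - ereal \<delta> < ?s"
  proof (cases ?s)
    case (real r)
    then show ?thesis using \<open>0 < \<delta>\<close> by (auto simp: min_def)
  qed (auto simp: min_def)
  then show ?thesis
    unfolding less_SUP_iff by (auto intro: less_imp_le)
qed

(* If the truncated values  min(1/d, W d) - d  are bounded by quantities with limsup <= c,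
   then limsup W <= c: as 1/d -> infinity the truncation eventually becomes inactive. *)
lemma near_optimal_limsup:
  fixes W :: "real \<Rightarrow> ereal" and \<phi> :: "real \<Rightarrow> real"
  assumes near_opt: "eventually (\<lambda>\<delta>. min (ereal (1 / \<delta>)) (W \<delta>) - ereal \<delta> \<le> ereal (\<phi> \<delta>)) (at_right 0)"
    and \<phi>_le: "\<And>b. c < b \<Longrightarrow> eventually (\<lambda>\<delta>. \<phi> \<delta> < b) (at_right 0)"
    and a: "ereal c < a"
  shows "eventually (\<lambda>\<delta>. W \<delta> < a) (at_right 0)"
proof -
  obtain b where "c < b" and b_a: "ereal b < a" using ereal_dense2[OF a] by auto
  define b' where "b' = (c + b) / 2"
  have "c < b'" "b' < b" using \<open>c < b\<close> unfolding b'_def by auto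
  have inv_large: "eventually (\<lambda>\<delta>. b < 1 / \<delta>) (at_right 0)"
    using filterlim_inverse_at_top_right by (simp add: filterlim_at_top_dense inverse_eq_divide)
  have small: "eventually (\<lambda>\<delta>. \<delta> < b - b') (at_right (0::real))"
    unfolding eventually_at_right_field using \<open>b' < b\<close> by (intro exI[of _ "b - b'"]) auto
  from near_opt \<phi>_le[OF \<open>c < b'\<close>] small inv_large
  show ?thesis
  proof eventually_elim
    case (elim \<delta>)
    show ?case
    proof (cases "ereal (1 / \<delta>) \<le> W \<delta>")
      case True
      then have "1 / \<delta> - \<delta> \<le> \<phi> \<delta>" using elim(1) by (simp add: min_def)
      then show ?thesis using elim by linarith
    next
      case False
      then have "W \<delta> - ereal \<delta> \<le> ereal (\<phi> \<delta>)" using elim(1) by (simp add: min_def)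
      also have "\<dots> < ereal b'" using elim(2) by simp
      finally have "W \<delta> < ereal (b' + \<delta>)"
        by (cases "W \<delta>") auto
      also have "\<dots> \<le> ereal b" using elim(3) by simp
      finally show ?thesis using b_a by simp
    qed
  qed
qed

lemma right_continuous_of_mono:
  fixes V :: "real \<Rightarrow> ereal"
  assumes mono: "mono V"
    and upper: "\<And>a. V m < a \<Longrightarrow> eventually (\<lambda>\<delta>. V (m + \<delta>) < a) (at_right 0)"
  shows "continuous (at_right m) V"
  unfolding continuous_within
proof (rule order_tendstoI)
  fix a assume "a < V m"
  have "a < V m'" if "m < m'" for m'
    using \<open>a < V m\<close> monoD[OF mono, of m m'] that by simp
  then show "eventually (\<lambda>m'. a < V m') (at_right m)"
    using eventually_at_right_less[of m] by (auto elim: eventually_mono)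
next
  fix a assume "V m < a"
  then show "eventually (\<lambda>m'. V m' < a) (at_right m)"
    using upper unfolding at_right_to_0[of m] eventually_filtermap by (simp add: add.commute)
qed

lemma right_continuous_from_near_optimal:
  fixes V :: "real \<Rightarrow> ereal" and \<phi> \<psi> \<eta> :: "real \<Rightarrow> real"
  assumes mono: "mono V"
    and near_opt: "\<And>\<delta>. 0 < \<delta> \<Longrightarrow> min (ereal (1 / \<delta>)) (V (m + \<delta>)) - ereal \<delta> \<le> ereal (\<phi> \<delta>)"
    and below: "eventually (\<lambda>\<delta>. ereal (\<psi> \<delta>) \<le> V m) (at_right 0)"
    and gap: "eventually (\<lambda>\<delta>. \<phi> \<delta> - \<psi> \<delta> \<le> \<eta> \<delta>) (at_right 0)"
    and \<eta>: "(\<eta> \<longlongrightarrow> 0) (at_right 0)"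
  shows "continuous (at_right m) V"
proof (rule right_continuous_of_mono[OF mono])
  fix a assume "V m < a"
  obtain \<delta>1 where "ereal (\<psi> \<delta>1) \<le> V m"
    using eventually_happens'[OF _ below] by auto
  with \<open>V m < a\<close> obtain c where c: "V m = ereal c" by (cases "V m") auto
  have near_opt': "eventually (\<lambda>\<delta>. min (ereal (1 / \<delta>)) (V (m + \<delta>)) - ereal \<delta> \<le> ereal (\<phi> \<delta>))
      (at_right 0)"
    using eventually_at_right_less[of 0] by eventually_elim (rule near_opt)
  have "eventually (\<lambda>\<delta>. \<phi> \<delta> < b) (at_right 0)" if "c < b" for b
  proof -
    have "eventually (\<lambda>\<delta>. \<eta> \<delta> < b - c) (at_right 0)"
      using order_tendstoD(2)[OF \<eta>] that by simp
    with below gap show ?thesis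
      by eventually_elim (simp add: c)
  qed
  then show "eventually (\<lambda>\<delta>. V (m + \<delta>) < a) (at_right 0)"
    using near_optimal_limsup[OF near_opt'] \<open>V m < a\<close> c by auto
qed

lemma measurable_of_filtration:
  assumes filt: "filtration (space M) Fil" and sub: "sets (Fil s) \<subseteq> sets M"
    and Y: "Y \<in> borel_measurable (Fil s)"
  shows "Y \<in> borel_measurable M"
  using measurable_mono[of borel borel "Fil s" M] sub Y filtration.space_F[OF filt] by auto

lemma disagreement_set_measurable:
  fixes Y Z :: "'w \<Rightarrow> 's::{metric_space, second_countable_topology}"
  assumes "Y \<in> borel_measurable M" "Z \<in> borel_measurable M"
  shows "{\<omega>\<in>space M. Y \<omega> \<noteq> Z \<omega>} \<in> sets M"
proof -
  have "{\<omega>\<in>space M. Y \<omega> \<noteq> Z \<omega>} = space M - {\<omega>\<in>space M. Y \<omega> = Z \<omega>}" by auto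
  then show ?thesis using measurable_equality_set[OF assms] by auto
qed

lemma Uc_mono: "m1 \<le> m2 \<Longrightarrow> Uc M T U X g t x m1 \<subseteq> Uc M T U X g t x m2"
  by (auto simp: Uc_def)

lemma Val_mono: "mono (Val M T U X f g t x)"
  unfolding Val_def by (intro monoI SUP_subset_mono Uc_mono order_refl)

lemma Fun_le_Val: "\<nu> \<in> Uc M T U X g t x m \<Longrightarrow> ereal (Fun M T X f t x \<nu>) \<le> Val M T U X f g t x m"
  unfolding Val_def by (rule SUP_upper)

lemma Val_right_continuous:
  fixes M :: "'w measure" and U :: "real \<Rightarrow> 'c set"
    and X :: "real \<Rightarrow> 's::{metric_space, second_countable_topology} \<Rightarrow> 'c \<Rightarrow> real \<Rightarrow> 'w \<Rightarrow> 's"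
    and f g :: "'s \<Rightarrow> real" and \<nu>d \<nu>t :: "real \<Rightarrow> 'c"
  assumes M: "finite_measure M"
    and terminal_meas: "\<And>\<nu>. \<nu> \<in> U t \<Longrightarrow> X t x \<nu> T \<in> borel_measurable M"
    and f_int: "\<And>\<nu>. \<nu> \<in> U t \<Longrightarrow> integrable M (\<lambda>\<omega>. f (X t x \<nu> T \<omega>))"
    and \<nu>d: "\<forall>\<delta>>0. \<nu>d \<delta> \<in> Uc M T U X g t x (m + \<delta>) \<and>
      ereal (Fun M T X f t x (\<nu>d \<delta>)) \<ge> min (ereal (1 / \<delta>)) (Val M T U X f g t x (m + \<delta>)) - ereal \<delta>"
    and "0 < \<delta>0"
    and \<nu>t: "\<forall>\<delta>\<in>{0<..\<delta>0}. \<nu>t \<delta> \<in> Uc M T U X g t x m"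
    and disagree: "((\<lambda>\<delta>. measure M {\<omega>\<in>space M. X t x (\<nu>d \<delta>) T \<omega> \<noteq> X t x (\<nu>t \<delta>) T \<omega>}) \<longlongrightarrow> 0)
      (at_right 0)"
    and ui: "unif_integrable M {0<..\<delta>0} (\<lambda>\<delta> \<omega>. max 0 (f (X t x (\<nu>d \<delta>) T \<omega>) - f (X t x (\<nu>t \<delta>) T \<omega>)))"
  shows "continuous (at_right m) (Val M T U X f g t x)"
proof -
  let ?F = "Fun M T X f t x"
  let ?excess = "\<lambda>\<delta>. \<integral>\<omega>. max 0 (f (X t x (\<nu>d \<delta>) T \<omega>) - f (X t x (\<nu>t \<delta>) T \<omega>)) \<partial>M"
  have admissible: "\<nu>d \<delta> \<in> U t" "\<nu>t \<delta> \<in> U t" if "\<delta> \<in> {0<..\<delta>0}" for \<delta>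
    using \<nu>d \<nu>t that by (auto simp: Uc_def)
  have small: "eventually (\<lambda>\<delta>. \<delta> \<in> {0<..\<delta>0}) (at_right 0)"
    unfolding eventually_at_right_field using \<open>0 < \<delta>0\<close> by (intro exI[of _ \<delta>0]) auto
  have excess_vanishes: "(?excess \<longlongrightarrow> 0) (at_right 0)"
    by (rule unif_integrable_vanishing_support[OF M ui _ _ _ disagree small])
      (auto intro!: disagreement_set_measurable terminal_meas admissible)
  show ?thesis
  proof (rule right_continuous_from_near_optimal[OF Val_mono _ _ _ excess_vanishes])
    show "min (ereal (1 / \<delta>)) (Val M T U X f g t x (m + \<delta>)) - ereal \<delta> \<le> ereal (?F (\<nu>d \<delta>))"
      if "0 < \<delta>" for \<delta>
      using \<nu>d that by blast
    show "eventually (\<lambda>\<delta>. ereal (?F (\<nu>t \<delta>)) \<le> Val M T U X f g t x m) (at_right 0)"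
      using small by eventually_elim (use \<nu>t in \<open>auto intro: Fun_le_Val\<close>)
    show "eventually (\<lambda>\<delta>. ?F (\<nu>d \<delta>) - ?F (\<nu>t \<delta>) \<le> ?excess \<delta>) (at_right 0)"
      using small by eventually_elim
        (auto simp: Fun_def intro!: integral_diff_le_positive_part f_int admissible)
  qed
qed

theorem mainTheorem5:
  fixes M :: "'w measure" and Fil :: "real \<Rightarrow> 'w measure" and T :: real
    and U :: "real \<Rightarrow> 'c set"
    and X :: "real \<Rightarrow> 's::{metric_space, second_countable_topology} \<Rightarrow> 'c \<Rightarrow> real \<Rightarrow> 'w \<Rightarrow> 's"
    and f g :: "'s \<Rightarrow> real"
    and t :: real and x :: 's and m :: real
  assumes T_pos: "0 < T"
    and prob: "prob_space M"
    and filt: "filtration (space M) Fil"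
    and filt_sub: "\<And>s. sets (Fil s) \<subseteq> sets M"
    and adapted: "\<And>t x \<nu> s. t \<in> {0..T} \<Longrightarrow> \<nu> \<in> U t \<Longrightarrow> s \<in> {t..T} \<Longrightarrow>
                    X t x \<nu> s \<in> borel_measurable (Fil s)"
    and cadlag: "\<And>t x \<nu> \<omega>. t \<in> {0..T} \<Longrightarrow> \<nu> \<in> U t \<Longrightarrow> \<omega> \<in> space M \<Longrightarrow>
                    cadlag_on {t..T} (\<lambda>s. X t x \<nu> s \<omega>)"
    and f_meas: "f \<in> borel_measurable borel"
    and g_meas: "g \<in> borel_measurable borel"
    and f_int: "\<And>t x \<nu>. t \<in> {0..T} \<Longrightarrow> \<nu> \<in> U t \<Longrightarrow> integrable M (\<lambda>\<omega>. f (X t x \<nu> T \<omega>))"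
    and g_int: "\<And>t x \<nu>. t \<in> {0..T} \<Longrightarrow> \<nu> \<in> U t \<Longrightarrow> integrable M (\<lambda>\<omega>. g (X t x \<nu> T \<omega>))"
    and inD: "(t, x, m) \<in> Dom M T U X g"
  shows "(\<forall>\<delta>>0. \<exists>\<nu>\<in>Uc M T U X g t x (m + \<delta>).
            ereal (Fun M T X f t x \<nu>) \<ge> min (ereal (1 / \<delta>)) (Val M T U X f g t x (m + \<delta>)) - ereal \<delta>)
    \<and> (\<forall>\<nu>d :: real \<Rightarrow> 'c. \<forall>\<delta>0 :: real.
          (\<forall>\<delta>>0. \<nu>d \<delta> \<in> Uc M T U X g t x (m + \<delta>) \<and>
                  ereal (Fun M T X f t x (\<nu>d \<delta>)) \<ge> min (ereal (1 / \<delta>)) (Val M T U X f g t x (m + \<delta>)) - ereal \<delta>)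
          \<longrightarrow> 0 < \<delta>0
          \<longrightarrow> (\<exists>\<nu>t :: real \<Rightarrow> 'c.
                 (\<forall>\<delta>\<in>{0<..\<delta>0}. \<nu>t \<delta> \<in> Uc M T U X g t x m)
               \<and> ((\<lambda>\<delta>. measure M {\<omega>\<in>space M. X t x (\<nu>d \<delta>) T \<omega> \<noteq> X t x (\<nu>t \<delta>) T \<omega>})
                     \<longlongrightarrow> 0) (at_right 0)
               \<and> unif_integrable M {0<..\<delta>0}
                   (\<lambda>\<delta> \<omega>. max 0 (f (X t x (\<nu>d \<delta>) T \<omega>) - f (X t x (\<nu>t \<delta>) T \<omega>))))
          \<longrightarrow> continuous (at_right m) (\<lambda>m'. Val M T U X f g t x m'))"
proof -
  let ?F = "Fun M T X f t x" and ?V = "Val M T U X f g t x" and ?Uc = "Uc M T U X g t x"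
  interpret prob_space M by (rule prob)
  have t: "t \<in> {0..T}" and feasible: "?Uc m \<noteq> {}" using inD by (auto simp: Dom_def)
  have terminal_meas: "X t x \<nu> T \<in> borel_measurable M" if "\<nu> \<in> U t" for \<nu>
    using measurable_of_filtration[OF filt filt_sub adapted[OF t that]] t by auto
  have near_optimal: "\<forall>\<delta>>0. \<exists>\<nu>\<in>?Uc (m + \<delta>).
      ereal (?F \<nu>) \<ge> min (ereal (1 / \<delta>)) (?V (m + \<delta>)) - ereal \<delta>"
  proof (intro allI impI)
    fix \<delta> :: real assume "0 < \<delta>"
    then have "?Uc (m + \<delta>) \<noteq> {}" using feasible Uc_mono[of m "m + \<delta>" M T U X g t x] by auto
    from near_optimal_exists[OF this \<open>0 < \<delta>\<close>, of ?F]
    show "\<exists>\<nu>\<in>?Uc (m + \<delta>). ereal (?F \<nu>) \<ge> min (ereal (1 / \<delta>)) (?V (m + \<delta>)) - ereal \<delta>"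
      unfolding Val_def by blast
  qed
  show ?thesis
    by (intro conjI near_optimal allI impI, elim exE conjE)
      (rule Val_right_continuous[where M=M and T=T and U=U and X=X and t=t and x=x,
        OF finite_measure_axioms terminal_meas f_int[OF t]])
qed

end
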